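(* Let $\Delta:M_n\to M_n$ be a weak-2-local derivation, let $p_1,\ldots,p_n$ be mutually orthogonal minimal projections in $M_n$, and let $q=1-p_n$. Let $R\subseteq\{1,\ldots,n-1\}$ and set $r=\sum_{i\in R}p_i$ if $R\neq\emptyset$ and $r=0$ if $R=\emptyset$. Assume $\Delta(qaq+rap_n)=0$ for every $a\in M_n$, and $\Delta(e_{kn})=0$ for some $1\le k\le n-1$. Then $\Delta(qaq+rap_n+\lambda e_{kn})=0$ for every $a\in M_n$ and $\lambda\in\mathbb{C}$.
   Context: $M_n=M_n(\mathbb{C})$. For $i,j$, $e_{ij}$ is the unique minimal partial isometry in $M_n$ with $e_{ij}^*e_{ij}=p_j$ and $e_{ij}e_{ij}^*=p_i$. A derivation on $M_n$ is a linear map $D$ with $D(ab)=D(a)b+aD(b)$. A (not necessarily linear) map $\Delta:M_n\to M_n$ is a weak-2-local derivation if for every $a,b\in M_n$ and every $\phi\in M_n^*$ there exists a derivation $D_{a,b,\phi}$ such that $\phi\Delta(a)=\phi D_{a,b,\phi}(a)$ and $\phi\Delta(b)=\phi D_{a,b,\phi}(b)$. *)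

theory Defs
  imports "HOL-Analysis.Analysis"
begin

text \<open>Complex n x n matrices are modelled as complex^'n^'n with a finite index type 'n
  (so n = CARD('n)). Matrix product is **, identity is mat 1.\<close>

type_synonym 'n cmat = "complex^'n^'n"

definition cscale :: "complex \<Rightarrow> 'n::finite cmat \<Rightarrow> 'n cmat" where
  "cscale c A = (\<chi> i j. c * A $ i $ j)"

definition adj :: "'n::finite cmat \<Rightarrow> 'n cmat" where
  "adj A = (\<chi> i j. cnj (A $ j $ i))"

definition is_functional :: "('n::finite cmat \<Rightarrow> complex) \<Rightarrow> bool" where
  "is_functional f \<longleftrightarrow> (\<forall>A B. f (A + B) = f A + f B) \<and> (\<forall>c A. f (cscale c A) = c * f A)"

definition is_derivation :: "('n::finite cmat \<Rightarrow> 'n cmat) \<Rightarrow> bool" where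
  "is_derivation D \<longleftrightarrow>
     (\<forall>A B. D (A + B) = D A + D B) \<and> (\<forall>c A. D (cscale c A) = cscale c (D A)) \<and>
     (\<forall>A B. D (A ** B) = D A ** B + A ** D B)"

definition weak_2_local_derivation :: "('n::finite cmat \<Rightarrow> 'n cmat) \<Rightarrow> bool" where
  "weak_2_local_derivation \<Delta> \<longleftrightarrow>
     (\<forall>a b \<phi>. is_functional \<phi> \<longrightarrow>
        (\<exists>D. is_derivation D \<and> \<phi> (\<Delta> a) = \<phi> (D a) \<and> \<phi> (\<Delta> b) = \<phi> (D b)))"

definition is_projection :: "'n::finite cmat \<Rightarrow> bool" where
  "is_projection p \<longleftrightarrow> adj p = p \<and> p ** p = p"

definition minimal_projection :: "'n::finite cmat \<Rightarrow> bool" where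
  "minimal_projection p \<longleftrightarrow> is_projection p \<and> p \<noteq> 0 \<and>
     (\<forall>q. is_projection q \<and> q ** p = q \<longrightarrow> q = 0 \<or> q = p)"

end

theory Submission
  imports Defs
begin

text \<open>Every derivation D of M_n has trace (D X) = 0, hence trace (C ** D C) = 0, since
  trace (D (C ** C)) = 2 trace (C ** D C). Testing a weak-2-local derivation \<Delta> against
  the functional X \<mapsto> trace ((a - b) ** X) therefore gives
  trace ((a - b) ** \<Delta> a) = trace ((a - b) ** \<Delta> b). If \<Delta> a = \<Delta> b = 0, apply this to the
  pairs (a + b, y), (y, 2a), (y, 2b) with y = a + b + W: the last two give
  trace (2 W ** \<Delta> y) = 0, and the first then gives trace (W ** \<Delta> (a + b)) = 0 for all W.\<close>

lemma matrix_add_rdistrib: "((A::'a::semiring_1^'n^'m) + B) ** C = A ** C + B ** C"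
  by (simp add: vec_eq_iff matrix_matrix_mult_def sum.distrib distrib_right)

lemma matrix_diff_ldistrib: "(A::'a::ring_1^'n^'m) ** (B - C) = A ** B - A ** C"
  by (simp add: vec_eq_iff matrix_matrix_mult_def sum_subtractf algebra_simps)

lemma matrix_mult_uminus_left: "(- A::'a::ring_1^'n^'m) ** B = - (A ** B)"
  by (simp add: vec_eq_iff matrix_matrix_mult_def sum_negf)

lemma matrix_mult_cscale_right: "(A::'n::finite cmat) ** cscale c B = cscale c (A ** B)"
  by (simp add: vec_eq_iff matrix_matrix_mult_def cscale_def sum_distrib_left algebra_simps)

lemma matrix_mult_cscale_left: "cscale c (A::'n::finite cmat) ** B = cscale c (A ** B)"
  by (simp add: vec_eq_iff matrix_matrix_mult_def cscale_def sum_distrib_left algebra_simps)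

lemma trace_cscale: "trace (cscale c (A::'n::finite cmat)) = c * trace A"
  by (simp add: trace_def cscale_def sum_distrib_left)

lemma trace_zero [simp]: "trace (0::'a::semiring_1^'n^'n) = 0"
  by (simp add: trace_def)

lemma trace_uminus: "trace (- A::'a::ring_1^'n^'n) = - trace A"
  by (simp add: trace_def sum_negf)

definition matrix_unit :: "'n::finite \<Rightarrow> 'n \<Rightarrow> 'n cmat" where
  "matrix_unit i j = (\<chi> a b. if a = i \<and> b = j then 1 else 0)"

lemma matrix_unit_mult_nth: "(matrix_unit i j ** X) $ a $ b = (if a = i then X $ j $ b else 0)"
  by (cases "a = i")
     (simp_all add: matrix_matrix_mult_def matrix_unit_def if_distrib if_distribR cong: if_cong)

lemma mult_matrix_unit_nth: "(X ** matrix_unit i j) $ a $ b = (if b = j then X $ a $ i else 0)"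
  by (cases "b = j")
     (simp_all add: matrix_matrix_mult_def matrix_unit_def if_distrib if_distribR cong: if_cong)

lemma matrix_unit_idem: "matrix_unit i i ** matrix_unit i i = matrix_unit i i"
  by (simp add: vec_eq_iff matrix_unit_mult_nth) (simp add: matrix_unit_def)

lemma matrix_unit_compress: "matrix_unit i i ** X ** matrix_unit i i = cscale (X $ i $ i) (matrix_unit i i)"
  by (simp add: vec_eq_iff matrix_unit_mult_nth mult_matrix_unit_nth cscale_def)
     (simp add: matrix_unit_def)

lemma sum_matrix_unit_mult: "(\<Sum>i\<in>UNIV. matrix_unit i i ** X) = X"
  by (simp add: vec_eq_iff matrix_unit_mult_nth sum_component)

lemma trace_matrix_unit_mult: "trace (matrix_unit j i ** X) = X $ i $ j"
  by (simp add: trace_def matrix_unit_mult_nth if_distrib cong: if_cong)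

lemma matrix_eq_zero_if_trace_mult_zero:
  assumes "\<And>W. trace (W ** (X::'n::finite cmat)) = 0"
  shows "X = 0"
  using assms[of "matrix_unit _ _"] by (simp add: vec_eq_iff trace_matrix_unit_mult)

lemma is_functional_trace_mult: "is_functional (\<lambda>X. trace ((W::'n::finite cmat) ** X))"
  unfolding is_functional_def
  by (simp add: matrix_add_ldistrib trace_add matrix_mult_cscale_right trace_cscale)

context
  fixes D :: "'n::finite cmat \<Rightarrow> 'n cmat"
  assumes D: "is_derivation D"
begin

lemma derivation_add: "D (A + B) = D A + D B"
  and derivation_cscale: "D (cscale c A) = cscale c (D A)"
  and derivation_mult: "D (A ** B) = D A ** B + A ** D B"
  using D unfolding is_derivation_def by blast+

lemma derivation_zero: "D 0 = 0"
  using derivation_add[of 0 0] by simp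

lemma derivation_diff: "D (A - B) = D A - D B"
  using derivation_add[of "A - B" B] by (simp add: algebra_simps)

lemma derivation_sum: "D (\<Sum>i\<in>S. f i) = (\<Sum>i\<in>S. D (f i))"
  by (induction S rule: infinite_finite_induct) (simp_all add: derivation_zero derivation_add)

lemma trace_derivation_mult_commute: "trace (D (A ** B)) = trace (D (B ** A))"
  by (simp add: derivation_mult trace_add trace_mul_sym[of A] trace_mul_sym[of "D A"] add.commute)

lemma trace_derivation_idempotent:
  assumes idem: "P ** P = P"
  shows "trace (D P) = 0"
proof -
  have DP: "D P = D P ** P + P ** D P"
    using derivation_mult[of P P] idem by simp
  have "P ** D P ** P = P ** D P ** P + P ** D P ** P"
    by (subst (1) DP)
       (simp add: matrix_add_ldistrib matrix_add_rdistrib matrix_mul_assoc idem,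
        simp add: matrix_mul_assoc[symmetric] idem)
  then have compressed: "P ** D P ** P = 0"
    by simp
  have "trace (P ** D P) = trace (P ** D P ** P)"
    using trace_mul_sym[of P "P ** D P"] by (simp add: matrix_mul_assoc idem)
  then have "trace (P ** D P) = 0"
    by (simp add: compressed trace_def)
  then show ?thesis
    by (subst DP) (simp add: trace_add trace_mul_sym[of "D P"])
qed

text \<open>Write X = \<Sigma>_i E_ii X; by cyclicity each trace (D (E_ii X)) equals
  trace (D (E_ii X E_ii)) = X_ii trace (D E_ii), and E_ii is idempotent.\<close>
lemma trace_derivation: "trace (D X) = 0"
proof -
  have diagonal_term: "trace (D (matrix_unit i i ** X)) = 0" for i
  proof -
    have "trace (D (matrix_unit i i ** X)) = trace (D (matrix_unit i i ** (matrix_unit i i ** X)))"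
      by (simp add: matrix_mul_assoc matrix_unit_idem)
    also have "\<dots> = trace (D (matrix_unit i i ** X ** matrix_unit i i))"
      by (rule trace_derivation_mult_commute)
    also have "\<dots> = 0"
      by (simp add: matrix_unit_compress derivation_cscale trace_cscale
          trace_derivation_idempotent[OF matrix_unit_idem])
    finally show ?thesis .
  qed
  have "trace (D X) = trace (D (\<Sum>i\<in>UNIV. matrix_unit i i ** X))"
    by (simp add: sum_matrix_unit_mult)
  also have "\<dots> = (\<Sum>i\<in>UNIV. trace (D (matrix_unit i i ** X)))"
    by (simp add: derivation_sum trace_def sum_component) (rule sum.swap)
  also have "\<dots> = 0"
    by (simp add: diagonal_term)
  finally show ?thesis .
qed

lemma trace_mult_derivation_self: "trace (C ** D C) = 0"
proof -
  have "0 = trace (D (C ** C))"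
    by (simp add: trace_derivation)
  also have "\<dots> = 2 * trace (C ** D C)"
    by (simp add: derivation_mult trace_add trace_mul_sym[of "D C"])
  finally show ?thesis
    by simp
qed

end

context
  fixes \<Delta> :: "'n::finite cmat \<Rightarrow> 'n cmat"
  assumes \<Delta>: "weak_2_local_derivation \<Delta>"
begin

lemma weak_2_local_derivation_trace_diff:
  "trace ((a - b) ** \<Delta> a) = trace ((a - b) ** \<Delta> b)"
proof -
  obtain D where D: "is_derivation D"
    and a: "trace ((a - b) ** \<Delta> a) = trace ((a - b) ** D a)"
    and b: "trace ((a - b) ** \<Delta> b) = trace ((a - b) ** D b)"
    using \<Delta> is_functional_trace_mult[of "a - b"]
    unfolding weak_2_local_derivation_def by blast
  have "trace ((a - b) ** D a) - trace ((a - b) ** D b) = trace ((a - b) ** D (a - b))"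
    by (simp add: derivation_diff[OF D] matrix_diff_ldistrib trace_sub)
  also have "\<dots> = 0"
    by (rule trace_mult_derivation_self[OF D])
  finally show ?thesis
    using a b by simp
qed

lemma weak_2_local_derivation_zero_cscale:
  assumes "\<Delta> a = 0"
  shows "\<Delta> (cscale c a) = 0"
proof (rule matrix_eq_zero_if_trace_mult_zero)
  fix W
  obtain D where D: "is_derivation D"
    and a: "trace (W ** \<Delta> a) = trace (W ** D a)"
    and ca: "trace (W ** \<Delta> (cscale c a)) = trace (W ** D (cscale c a))"
    using \<Delta> is_functional_trace_mult[of W]
    unfolding weak_2_local_derivation_def by blast
  show "trace (W ** \<Delta> (cscale c a)) = 0"
    using a ca assms
    by (simp add: derivation_cscale[OF D] matrix_mult_cscale_right trace_cscale)
qed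

lemma weak_2_local_derivation_zero_add:
  assumes a: "\<Delta> a = 0" and b: "\<Delta> b = 0"
  shows "\<Delta> (a + b) = 0"
proof (rule matrix_eq_zero_if_trace_mult_zero)
  fix W
  define y where "y = a + b + W"
  have "trace ((y - cscale 2 a) ** \<Delta> y) = 0"
    using weak_2_local_derivation_trace_diff[of y "cscale 2 a"]
    by (simp add: weak_2_local_derivation_zero_cscale[OF a])
  moreover have "trace ((y - cscale 2 b) ** \<Delta> y) = 0"
    using weak_2_local_derivation_trace_diff[of y "cscale 2 b"]
    by (simp add: weak_2_local_derivation_zero_cscale[OF b])
  moreover have "(y - cscale 2 a) + (y - cscale 2 b) = cscale 2 W"
    by (simp add: y_def vec_eq_iff cscale_def algebra_simps)
  ultimately have "trace (cscale 2 W ** \<Delta> y) = 0"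
    by (metis add.right_neutral matrix_add_rdistrib trace_add)
  then have "trace (W ** \<Delta> y) = 0"
    by (simp add: matrix_mult_cscale_left trace_cscale)
  moreover have "trace (- W ** \<Delta> (a + b)) = trace (- W ** \<Delta> y)"
    using weak_2_local_derivation_trace_diff[of "a + b" y] by (simp add: y_def)
  ultimately show "trace (W ** \<Delta> (a + b)) = 0"
    by (simp add: matrix_mult_uminus_left trace_uminus)
qed

end

theorem lemma2p6:
  fixes \<Delta> :: "'n::finite cmat \<Rightarrow> 'n cmat"
    and p :: "'n \<Rightarrow> 'n cmat"
    and l k :: 'n
    and R :: "'n set"
    and e :: "'n cmat"
  assumes wl: "weak_2_local_derivation \<Delta>"
    and minp: "\<And>i. minimal_projection (p i)"
    and orth: "\<And>i j. i \<noteq> j \<Longrightarrow> p i ** p j = 0"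
    and R: "R \<subseteq> UNIV - {l}"
    and hyp: "\<And>a. \<Delta> ((mat 1 - p l) ** a ** (mat 1 - p l) + sum p R ** a ** p l) = 0"
    and k: "k \<noteq> l"
    and e: "adj e ** e = p l" "e ** adj e = p k"
    and ek: "\<Delta> e = 0"
  shows "\<forall>a c. \<Delta> ((mat 1 - p l) ** a ** (mat 1 - p l) + sum p R ** a ** p l + cscale c e) = 0"
  using weak_2_local_derivation_zero_add[OF wl hyp weak_2_local_derivation_zero_cscale[OF wl ek]]
  by blast

end
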